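(* Let $f_0, g_0, \omega > 0$, let $p,q>0$ with $pq>1$, and let $C_p, C_q > 0$. Let $T>0$ and let $(f,g) \in \big(C^1([0,T))\big)^2$ be non-negative functions solving \[ \begin{cases} \frac{d}{dt} f(t) + \frac{\omega}{q+1} f(t) = (p+1) C_p\, g(t)^p, & t \in [0,T),\\ \frac{d}{dt} g(t) + \frac{\omega}{p+1} g(t) = (q+1) C_q\, f(t)^q, & t \in [0,T),\\ f(0) = f_0,\quad g(0) = g_0. \end{cases} \] Then for all $0 \le t < T$, \[ C_q f(t)^{q+1} e^{\omega t} - C_q f_0^{q+1} = C_p g(t)^{p+1} e^{\omega t} - C_p g_0^{p+1}. \] Moreover, if \[ \max\Big( 2^{\frac{p+1}{q+1}\frac{pq}{pq-1}} (q+1)^{-\frac{p+1}{pq-1}} (p+1)^{-\frac{p+1}{pq-1}} \omega^{\frac{p+1}{pq-1}} C_p^{-\frac{1}{pq-1}} C_q^{-\frac{p}{pq-1}},\ C_q^{-\frac{1}{q+1}} C_p^{\frac{1}{q+1}} g_0^{\frac{p+1}{q+1}} \Big) < f_0, \] then for all $0 \le t < T$, \[ e^{\frac{\omega}{p+1} t} g(t) \ge \Big\{ \Big(\frac{C_p}{C_q}\Big)^{\frac{pq-1}{(p+1)(q+1)}} f_0^{-\frac{pq-1}{p+1}} - 2^{-\frac{pq}{q+1}} (q+1)(p+1)\omega^{-1} C_q^{\frac{1}{q+1}} C_p^{\frac{q}{q+1}} \Big(1 - e^{-\frac{\omega(pq-1)}{(p+1)(q+1)} t}\Big) \Big\}^{-\frac{q+1}{pq-1}}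 - \big( C_q C_p^{-1} f_0^{q+1} - g_0^{p+1} \big)^{\frac{1}{p+1}}, \] and \[ T \le -\frac{(q+1)(p+1)}{\omega(pq-1)} \log\Big( 1 - \frac{2^{\frac{pq}{q+1}}}{(q+1)(p+1)}\, \omega\, C_q^{-\frac{p}{p+1}} C_p^{-\frac{1}{p+1}} f_0^{-\frac{pq-1}{p+1}} \Big). \] *)

theory Defs
  imports "HOL-Analysis.Analysis"
begin

end

theory Submission
  imports Defs
begin

(* Differentiating e^(\<omega> t) (Cq f^(q+1) - Cp g^(p+1)) and inserting the equations shows that it is
   constant. For the blow-up, let Y = e^(\<omega> t/(p+1)) g + k, where k^(p+1) = (Cq/Cp) f0^(q+1) - g0^(p+1)
   is positive for large f0. Then Y' = (q+1) Cq e^(\<omega> t/(p+1)) f^q, and the conservation law together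
   with (x + y)^(p+1) \<le> 2^p (x^(p+1) + y^(p+1)) bounds f from below by Y, giving the Bernoulli-type
   inequality Y' \<ge> A e^(-\<lambda> t) Y^(1+r) with r = (pq-1)/(q+1) and \<lambda> = \<omega>(pq-1)/((p+1)(q+1)).
   Integrating, Y^(-r) \<le> Y(0)^(-r) - (r A/\<lambda>)(1 - e^(-\<lambda> t)); superadditivity of x^(p+1) bounds
   Y(0)^(-r), and as the right-hand side must stay positive, T is at most the time at which it
   vanishes. *)

lemma DERIV_nonneg_imp_le_on_halfopen:
  fixes h h' :: "real \<Rightarrow> real" and a b t :: real
  assumes deriv: "\<And>s. s \<in> {a..<b} \<Longrightarrow> (h has_real_derivative h' s) (at s within {a..<b})"
    and nonneg: "\<And>s. s \<in> {a<..<b} \<Longrightarrow> h' s \<ge> 0"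
    and t: "t \<in> {a..<b}"
  shows "h a \<le> h t"
proof (rule DERIV_nonneg_imp_increasing_open[of a t h])
  show "a \<le> t" using t by simp
  have "continuous_on {a..<b} h"
    using DERIV_continuous[OF deriv] by (simp add: continuous_on_eq_continuous_within)
  then show "continuous_on {a..t} h"
    by (rule continuous_on_subset) (use t in auto)
  fix s assume "a < s" "s < t"
  then have s: "s \<in> {a<..<b}" using t by auto
  have "(h has_real_derivative h' s) (at s within {a<..<b})"
    by (rule has_field_derivative_subset[OF deriv]) (use s in auto)
  then have "(h has_real_derivative h' s) (at s)"
    using at_within_open[of s "{a<..<b}"] s by simp
  then show "\<exists>y. (h has_real_derivative y) (at s) \<and> 0 \<le> y"
    using nonneg[OF s] by blast
qed

lemma has_real_derivative_exp_mult:
  fixes h :: "real \<Rightarrow> real"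
  assumes "(h has_real_derivative h') (at x within S)"
  shows "((\<lambda>s. exp (c * s) * h s) has_real_derivative exp (c * x) * (h' + c * h x)) (at x within S)"
  using assms by (auto intro!: derivative_eq_intros simp: algebra_simps)

lemma exp_weighted_le_of_deriv:
  fixes h h' :: "real \<Rightarrow> real" and a b c t :: real
  assumes deriv: "\<And>s. s \<in> {a..<b} \<Longrightarrow> (h has_real_derivative h' s) (at s within {a..<b})"
    and forcing: "\<And>s. s \<in> {a<..<b} \<Longrightarrow> h' s + c * h s \<ge> 0"
    and t: "t \<in> {a..<b}"
  shows "exp (c * a) * h a \<le> exp (c * t) * h t"
proof (rule DERIV_nonneg_imp_le_on_halfopen[OF _ _ t])
  fix s assume "s \<in> {a..<b}"
  show "((\<lambda>s. exp (c * s) * h s) has_real_derivative exp (c * s) * (h' s + c * h s))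
          (at s within {a..<b})"
    by (rule has_real_derivative_exp_mult[OF deriv[OF \<open>s \<in> {a..<b}\<close>]])
next
  fix s assume "s \<in> {a<..<b}"
  then show "exp (c * s) * (h' s + c * h s) \<ge> 0"
    using forcing by simp
qed

lemma powr_add_le_two_powr:
  fixes x y a :: real
  assumes "x > 0" "y > 0" "a \<ge> 1"
  shows "(x + y) powr a \<le> 2 powr (a - 1) * (x powr a + y powr a)"
proof -
  have "((1 - 1/2) *\<^sub>R x + (1/2) *\<^sub>R y) powr a \<le> (1 - 1/2) * x powr a + (1/2) * y powr a"
    by (rule convex_onD[OF powr_convex[OF assms(3)]]) (use assms in auto)
  then have "((x + y) / 2) powr a \<le> (x powr a + y powr a) / 2"
    by (simp add: field_simps)
  then have "2 powr a * ((x + y) / 2) powr a \<le> 2 powr a * ((x powr a + y powr a) / 2)"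
    by (intro mult_left_mono) auto
  moreover have "(x + y) powr a = 2 powr a * ((x + y) / 2) powr a"
    using assms by (simp add: powr_divide)
  ultimately show ?thesis
    by (simp add: powr_diff)
qed

lemma add_powr_le_powr_add:
  fixes x y a :: real
  assumes "x \<ge> 0" "y \<ge> 0" "a \<ge> 1"
  shows "x powr a + y powr a \<le> (x + y) powr a"
proof (cases "x + y = 0")
  case True
  then have "x = 0" "y = 0" using assms by auto
  then show ?thesis by simp
next
  case False
  then have xy: "x + y > 0" using assms by simp
  have "x powr a = x * x powr (a - 1)" "y powr a = y * y powr (a - 1)"
    using assms by (auto simp: powr_diff)
  moreover have "x * x powr (a - 1) \<le> x * (x + y) powr (a - 1)"
    "y * y powr (a - 1) \<le> y * (x + y) powr (a - 1)"
    using assms by (auto intro!: mult_left_mono powr_mono2)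
  moreover have "(x + y) * (x + y) powr (a - 1) = (x + y) powr a"
    using xy by (simp add: powr_diff)
  ultimately show ?thesis
    by (simp add: distrib_right)
qed

lemma powr_neg_le_of_superlinear_growth:
  fixes Y Y' :: "real \<Rightarrow> real" and A \<kappa> r T t :: real
  assumes r: "r > 0" and \<kappa>: "\<kappa> \<noteq> 0"
    and deriv: "\<And>s. s \<in> {0..<T} \<Longrightarrow> (Y has_real_derivative Y' s) (at s within {0..<T})"
    and pos: "\<And>s. s \<in> {0..<T} \<Longrightarrow> Y s > 0"
    and growth: "\<And>s. s \<in> {0..<T} \<Longrightarrow> A * exp (- \<kappa> * s) * Y s powr (1 + r) \<le> Y' s"
    and t: "t \<in> {0..<T}"
  shows "Y t powr (- r) \<le> Y 0 powr (- r) - r * A / \<kappa> * (1 - exp (- \<kappa> * t))"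
proof -
  define \<Phi> where "\<Phi> s = - (Y s powr (- r)) - r * A / \<kappa> * (1 - exp (- \<kappa> * s))" for s
  have "\<Phi> 0 \<le> \<Phi> t"
  proof (rule DERIV_nonneg_imp_le_on_halfopen[OF _ _ t])
    fix s assume s: "s \<in> {0..<T}"
    show "(\<Phi> has_real_derivative r * (Y s powr (- r - 1) * Y' s - A * exp (- \<kappa> * s)))
            (at s within {0..<T})"
      unfolding \<Phi>_def using pos[OF s] \<kappa>
      by (auto intro!: derivative_eq_intros deriv[OF s] simp: field_simps)
  next
    fix s assume "s \<in> {0<..<T}"
    then have s: "s \<in> {0..<T}" by simp
    have "A * exp (- \<kappa> * s) = Y s powr (- r - 1) * (A * exp (- \<kappa> * s) * Y s powr (1 + r))"
      using pos[OF s] by (simp add: powr_add[symmetric])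
    also have "\<dots> \<le> Y s powr (- r - 1) * Y' s"
      by (intro mult_left_mono growth s) simp
    finally show "r * (Y s powr (- r - 1) * Y' s - A * exp (- \<kappa> * s)) \<ge> 0"
      using r by simp
  qed
  then show ?thesis unfolding \<Phi>_def by simp
qed

lemma le_neg_ln_div_of_exp_neg_gt:
  fixes \<kappa> c T :: real
  assumes "\<kappa> > 0" "0 < c" "c \<le> 1"
    and gt: "\<And>t. t \<in> {0..<T} \<Longrightarrow> c < exp (- \<kappa> * t)"
  shows "T \<le> - ln c / \<kappa>"
proof (rule ccontr)
  assume "\<not> T \<le> - ln c / \<kappa>"
  moreover have "ln c \<le> 0"
    using assms by simp
  then have "- ln c / \<kappa> \<ge> 0"
    using assms by (simp add: divide_nonpos_pos)
  ultimately have "c < exp (- \<kappa> * (- ln c / \<kappa>))"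
    by (intro gt) simp
  then show False
    using assms by simp
qed

locale coupled_ode =
  fixes f g f' g' :: "real \<Rightarrow> real"
    and f0 g0 \<omega> p q Cp Cq T :: real
  assumes f0_pos: "f0 > 0" and g0_pos: "g0 > 0" and \<omega>_pos: "\<omega> > 0"
    and p_pos: "p > 0" and q_pos: "q > 0" and Cp_pos: "Cp > 0" and Cq_pos: "Cq > 0"
    and f_deriv: "\<And>t. t \<in> {0..<T} \<Longrightarrow> (f has_real_derivative f' t) (at t within {0..<T})"
    and g_deriv: "\<And>t. t \<in> {0..<T} \<Longrightarrow> (g has_real_derivative g' t) (at t within {0..<T})"
    and f_ode: "\<And>t. t \<in> {0..<T} \<Longrightarrow> f' t + \<omega> / (q + 1) * f t = (p + 1) * Cp * g t powr p"
    and g_ode: "\<And>t. t \<in> {0..<T} \<Longrightarrow> g' t + \<omega> / (p + 1) * g t = (q + 1) * Cq * f t powr q"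
    and f_init: "f 0 = f0" and g_init: "g 0 = g0"
begin

lemma f_pos:
  assumes t: "t \<in> {0..<T}"
  shows "f t > 0"
proof -
  have "exp (\<omega> / (q + 1) * 0) * f 0 \<le> exp (\<omega> / (q + 1) * t) * f t"
    by (rule exp_weighted_le_of_deriv[OF f_deriv _ t]) (use f_ode p_pos Cp_pos in auto)
  then have "exp (\<omega> / (q + 1) * t) * f t > 0"
    using f_init f0_pos by simp
  then show ?thesis
    by (simp add: zero_less_mult_iff)
qed

lemma g_pos:
  assumes t: "t \<in> {0..<T}"
  shows "g t > 0"
proof -
  have "exp (\<omega> / (p + 1) * 0) * g 0 \<le> exp (\<omega> / (p + 1) * t) * g t"
    by (rule exp_weighted_le_of_deriv[OF g_deriv _ t]) (use g_ode q_pos Cq_pos in auto)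
  then have "exp (\<omega> / (p + 1) * t) * g t > 0"
    using g_init g0_pos by simp
  then show ?thesis
    by (simp add: zero_less_mult_iff)
qed

lemma energy_identity:
  assumes t: "t \<in> {0..<T}"
  shows "Cq * f t powr (q + 1) * exp (\<omega> * t) - Cq * f0 powr (q + 1)
       = Cp * g t powr (p + 1) * exp (\<omega> * t) - Cp * g0 powr (p + 1)"
proof -
  define H where "H s = exp (\<omega> * s) * (Cq * f s powr (q + 1) - Cp * g s powr (p + 1))" for s
  have "(H has_real_derivative 0) (at s within {0..<T})" if s: "s \<in> {0..<T}" for s
  proof -
    have f'_eq: "(q + 1) * f' s = (q + 1) * (p + 1) * Cp * g s powr p - \<omega> * f s"
      and g'_eq: "(p + 1) * g' s = (p + 1) * (q + 1) * Cq * f s powr q - \<omega> * g s"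
      and f_powr: "f s powr (q + 1) = f s powr q * f s"
      and g_powr: "g s powr (p + 1) = g s powr p * g s"
      using f_ode[OF s] g_ode[OF s] f_pos[OF s] g_pos[OF s] p_pos q_pos
      by (simp_all add: powr_add field_simps add_nonneg_eq_0_iff)
    have "(H has_real_derivative
            \<omega> * exp (\<omega> * s) * (Cq * f s powr (q + 1) - Cp * g s powr (p + 1))
          + exp (\<omega> * s) * (Cq * f s powr q * ((q + 1) * f' s) - Cp * g s powr p * ((p + 1) * g' s)))
          (at s within {0..<T})"
      unfolding H_def using f_pos[OF s] g_pos[OF s]
      by (auto intro!: derivative_eq_intros f_deriv[OF s] g_deriv[OF s] simp: algebra_simps)
    also have "\<omega> * exp (\<omega> * s) * (Cq * f s powr (q + 1) - Cp * g s powr (p + 1))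
          + exp (\<omega> * s) * (Cq * f s powr q * ((q + 1) * f' s) - Cp * g s powr p * ((p + 1) * g' s))
          = 0"
      unfolding f'_eq g'_eq f_powr g_powr by (simp add: algebra_simps)
    finally show ?thesis .
  qed
  then obtain c where "\<forall>s\<in>{0..<T}. H s = c"
    using has_field_derivative_zero_constant[of "{0..<T}" H] by auto
  then have "H t = H 0"
    using t by auto
  then show ?thesis
    by (simp add: H_def f_init g_init algebra_simps)
qed

lemma large_data_iff:
  "Cq powr (- 1 / (q + 1)) * Cp powr (1 / (q + 1)) * g0 powr ((p + 1) / (q + 1)) < f0
   \<longleftrightarrow> Cp * g0 powr (p + 1) < Cq * f0 powr (q + 1)"
  (is "?M < f0 \<longleftrightarrow> _")
proof -
  obtain b where b: "q + 1 = b" "b > 0"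
    using q_pos by simp
  have "ln ?M = (ln Cp + (p + 1) * ln g0 - ln Cq) / (q + 1)"
    unfolding b(1) using Cp_pos Cq_pos g0_pos b(2) by (simp add: ln_mult ln_powr field_simps)
  then have "?M < f0 \<longleftrightarrow> ln Cp + (p + 1) * ln g0 < ln Cq + (q + 1) * ln f0"
    using Cp_pos Cq_pos g0_pos f0_pos q_pos
    by (subst ln_less_cancel_iff[symmetric]) (auto simp: divide_less_eq algebra_simps)
  also have "\<dots> \<longleftrightarrow> Cp * g0 powr (p + 1) < Cq * f0 powr (q + 1)"
    using Cp_pos Cq_pos g0_pos f0_pos
    by (subst ln_less_cancel_iff[symmetric]) (auto simp: ln_mult ln_powr)
  finally show ?thesis .
qed

end

locale coupled_ode_large_data = coupled_ode +
  assumes pq: "p * q > 1"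
    and large_data: "Cp * g0 powr (p + 1) < Cq * f0 powr (q + 1)"
begin

(* In the notation of the header: shift = k, shifted_g = Y, rate = \<lambda>, growth_coeff = A. *)
definition shift :: real where
  "shift = (Cq * Cp powr (-1) * f0 powr (q + 1) - g0 powr (p + 1)) powr (1 / (p + 1))"

definition shifted_g :: "real \<Rightarrow> real" where
  "shifted_g t = exp (\<omega> / (p + 1) * t) * g t + shift"

definition rate :: real where
  "rate = \<omega> * (p * q - 1) / ((p + 1) * (q + 1))"

definition growth_coeff :: real where
  "growth_coeff = (q + 1) * Cq powr (1 / (q + 1)) * Cp powr (q / (q + 1)) * 2 powr (- (p * q) / (q + 1))"

definition bound_coeff :: real where
  "bound_coeff = 2 powr (- (p * q) / (q + 1)) * (q + 1) * (p + 1) * (1 / \<omega>)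
                 * Cq powr (1 / (q + 1)) * Cp powr (q / (q + 1))"

definition bound_init :: real where
  "bound_init = (Cp / Cq) powr ((p * q - 1) / ((p + 1) * (q + 1))) * f0 powr (- (p * q - 1) / (p + 1))"

definition blowup_ratio :: real where
  "blowup_ratio = 2 powr (p * q / (q + 1)) / ((q + 1) * (p + 1)) * \<omega>
                  * Cq powr (- p / (p + 1)) * Cp powr (- 1 / (p + 1)) * f0 powr (- (p * q - 1) / (p + 1))"

lemma rate_pos: "rate > 0"
  and growth_coeff_pos: "growth_coeff > 0"
  and bound_coeff_pos: "bound_coeff > 0"
  and blowup_ratio_pos: "blowup_ratio > 0"
  unfolding rate_def growth_coeff_def bound_coeff_def blowup_ratio_def
  using \<omega>_pos Cp_pos Cq_pos f0_pos p_pos q_pos pq by simp_all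

(* With p + 1, q + 1 and p q - 1 replaced by positive atoms, field_simps clears all denominators
   in the exponents. *)
lemma exponents_cases:
  obtains a b d where "p = a - 1" "q = b - 1" "p * q - 1 = d" "a > 0" "b > 0" "d > 0"
  using p_pos q_pos pq by (metis add_diff_cancel diff_gt_0_iff_gt add_pos_pos zero_less_one)

lemma blowup_ratio_lt_one_iff:
  "2 powr ((p + 1) / (q + 1) * (p * q / (p * q - 1))) * (q + 1) powr (- (p + 1) / (p * q - 1))
     * (p + 1) powr (- (p + 1) / (p * q - 1)) * \<omega> powr ((p + 1) / (p * q - 1))
     * Cp powr (- 1 / (p * q - 1)) * Cq powr (- p / (p * q - 1)) < f0
   \<longleftrightarrow> blowup_ratio < 1"
  (is "?M < f0 \<longleftrightarrow> _")
proof -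
  obtain a b d where p_eq: "p = a - 1" and q_eq: "q = b - 1" and d_eq: "p * q - 1 = d"
    and pos: "a > 0" "b > 0" "d > 0"
    by (rule exponents_cases)
  have ln_M: "ln ?M = a / b * ((a - 1) * (b - 1) / d) * ln 2 - a / d * ln b - a / d * ln a
      + a / d * ln \<omega> - 1 / d * ln Cp - (a - 1) / d * ln Cq"
    unfolding d_eq unfolding p_eq q_eq using \<omega>_pos Cp_pos Cq_pos pos
    by (simp add: ln_mult ln_powr mult_pos_pos) (simp add: field_simps)
  have ln_ratio: "ln blowup_ratio = (a - 1) * (b - 1) / b * ln 2 - ln b - ln a + ln \<omega>
      - (a - 1) / a * ln Cq - 1 / a * ln Cp - d / a * ln f0"
    unfolding blowup_ratio_def d_eq unfolding p_eq q_eq using \<omega>_pos Cp_pos Cq_pos f0_pos pos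
    by (simp add: ln_mult ln_div ln_powr mult_pos_pos) (simp add: field_simps)
  have ln_eq: "ln blowup_ratio = d / a * (ln ?M - ln f0)"
    unfolding ln_M ln_ratio using pos by (simp add: field_simps)
  have "?M > 0"
    using \<omega>_pos Cp_pos Cq_pos p_pos q_pos by simp
  have "blowup_ratio < 1 \<longleftrightarrow> ln blowup_ratio < 0"
    using blowup_ratio_pos by simp
  also have "\<dots> \<longleftrightarrow> ln ?M < ln f0"
    unfolding ln_eq using pos by (simp add: divide_less_0_iff mult_less_0_iff)
  also have "\<dots> \<longleftrightarrow> ?M < f0"
    using \<open>?M > 0\<close> f0_pos by simp
  finally show ?thesis ..
qed

lemma bound_init_eq: "bound_init = bound_coeff * blowup_ratio"
proof -
  obtain a b d where p_eq: "p = a - 1" and q_eq: "q = b - 1" and d_eq: "p * q - 1 = d"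
    and pos: "a > 0" "b > 0" "d > 0"
    by (rule exponents_cases)
  have "ln bound_init = d / (a * b) * (ln Cp - ln Cq) - d / a * ln f0"
    unfolding bound_init_def d_eq unfolding p_eq q_eq using Cp_pos Cq_pos f0_pos pos
    by (simp add: ln_mult ln_div ln_powr)
  moreover have "ln (bound_coeff * blowup_ratio) = d / (a * b) * (ln Cp - ln Cq) - d / a * ln f0"
    unfolding bound_coeff_def blowup_ratio_def d_eq unfolding p_eq q_eq
    using \<omega>_pos Cp_pos Cq_pos f0_pos pos
    by (simp add: ln_mult ln_div ln_powr mult_pos_pos)
      (simp add: d_eq[unfolded p_eq q_eq, symmetric] field_simps)
  moreover have "bound_init > 0" "bound_coeff * blowup_ratio > 0"
    unfolding bound_init_def bound_coeff_def blowup_ratio_def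
    using \<omega>_pos Cp_pos Cq_pos f0_pos p_pos q_pos by simp_all
  ultimately show ?thesis
    by (metis ln_inj_iff)
qed

lemma shift_powr: "shift powr (p + 1) = Cq * Cp powr (-1) * f0 powr (q + 1) - g0 powr (p + 1)"
  and shift_pos: "shift > 0"
proof -
  have "Cq * Cp powr (-1) * f0 powr (q + 1) - g0 powr (p + 1) > 0"
    using large_data Cp_pos by (simp add: powr_minus field_simps)
  then show "shift powr (p + 1) = Cq * Cp powr (-1) * f0 powr (q + 1) - g0 powr (p + 1)" "shift > 0"
    using p_pos by (simp_all add: shift_def powr_powr)
qed

lemma shifted_g_pos: "t \<in> {0..<T} \<Longrightarrow> shifted_g t > 0"
  using g_pos shift_pos by (simp add: shifted_g_def add_pos_pos)

lemma shifted_g_deriv: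
  assumes s: "s \<in> {0..<T}"
  shows "(shifted_g has_real_derivative exp (\<omega> / (p + 1) * s) * ((q + 1) * Cq * f s powr q))
           (at s within {0..<T})"
proof -
  have "(shifted_g has_real_derivative exp (\<omega> / (p + 1) * s) * (g' s + \<omega> / (p + 1) * g s))
          (at s within {0..<T})"
    unfolding shifted_g_def[abs_def]
    by (rule DERIV_add[OF has_real_derivative_exp_mult[OF g_deriv[OF s]] DERIV_const, simplified])
  then show ?thesis
    by (simp only: g_ode[OF s])
qed

lemma shifted_g_powr_le:
  assumes s: "s \<in> {0..<T}"
  shows "Cp * shifted_g s powr (p + 1) \<le> 2 powr p * (Cq * f s powr (q + 1) * exp (\<omega> * s))"
proof -
  define G where "G = exp (\<omega> / (p + 1) * s) * g s"
  have G_pos: "G > 0"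
    using g_pos[OF s] by (simp add: G_def)
  have "G powr (p + 1) = exp (\<omega> * s) * g s powr (p + 1)"
    using p_pos by (simp add: G_def powr_mult exp_powr_real)
  moreover have "Cp * shift powr (p + 1) = Cq * f0 powr (q + 1) - Cp * g0 powr (p + 1)"
    unfolding shift_powr using Cp_pos by (simp add: powr_minus field_simps)
  ultimately have energy:
    "Cq * f s powr (q + 1) * exp (\<omega> * s) = Cp * (G powr (p + 1) + shift powr (p + 1))"
    using energy_identity[OF s] by (simp add: distrib_left algebra_simps)
  have "shifted_g s powr (p + 1) \<le> 2 powr p * (G powr (p + 1) + shift powr (p + 1))"
    using powr_add_le_two_powr[OF G_pos shift_pos, of "p + 1"] p_pos
    by (simp add: shifted_g_def G_def)
  then have "Cp * shifted_g s powr (p + 1) \<le> Cp * (2 powr p * (G powr (p + 1) + shift powr (p + 1)))"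
    using Cp_pos by (simp add: mult_left_mono)
  then show ?thesis
    unfolding energy by (simp add: algebra_simps)
qed

lemma shifted_g_growth:
  assumes s: "s \<in> {0..<T}"
  shows "growth_coeff * exp (- rate * s) * shifted_g s powr (1 + (p * q - 1) / (q + 1))
         \<le> exp (\<omega> / (p + 1) * s) * ((q + 1) * Cq * f s powr q)"
    (is "?lhs \<le> ?rhs")
proof -
  define Y where "Y = shifted_g s"
  have Y_pos: "Y > 0" and f_s: "f s > 0"
    using shifted_g_pos[OF s] f_pos[OF s] by (simp_all add: Y_def)
  have "ln (Cp * Y powr (p + 1)) \<le> ln (2 powr p * (Cq * f s powr (q + 1) * exp (\<omega> * s)))"
    using shifted_g_powr_le[OF s] Y_pos f_s Cp_pos Cq_pos by (simp add: Y_def)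
  then have ln_ineq: "ln Cp + (p + 1) * ln Y \<le> p * ln 2 + ln Cq + (q + 1) * ln (f s) + \<omega> * s"
    using Y_pos f_s Cp_pos Cq_pos by (simp add: ln_mult ln_powr)
  have ln_lhs: "ln ?lhs = ln (q + 1) + ln Cq / (q + 1) + q / (q + 1) * ln Cp - p * q / (q + 1) * ln 2
                        - rate * s + (1 + (p * q - 1) / (q + 1)) * ln Y"
    using Y_pos Cp_pos Cq_pos q_pos by (simp add: Y_def growth_coeff_def ln_mult ln_powr mult_pos_pos)
  have ln_rhs: "ln ?rhs = \<omega> / (p + 1) * s + ln (q + 1) + ln Cq + q * ln (f s)"
    using f_s Cq_pos q_pos by (simp add: ln_mult ln_powr mult_pos_pos)
  obtain a b d where p_eq: "p = a - 1" and q_eq: "q = b - 1" and pos: "a > 0" "b > 0"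
    by (rule exponents_cases)
  have "ln ?rhs - ln ?lhs
      = q / (q + 1) * (p * ln 2 + ln Cq + (q + 1) * ln (f s) + \<omega> * s - ln Cp - (p + 1) * ln Y)"
    unfolding ln_lhs ln_rhs unfolding rate_def unfolding p_eq q_eq
    using pos by (simp add: field_simps)
  also have "\<dots> \<ge> 0"
    using ln_ineq q_pos by simp
  finally show ?thesis
    using Y_pos f_s Cq_pos q_pos growth_coeff_pos by (simp add: Y_def[symmetric])
qed

lemma shifted_g_init_le: "shifted_g 0 powr (- ((p * q - 1) / (q + 1))) \<le> bound_init"
proof -
  define Y where "Y = shifted_g 0"
  have Y_eq: "Y = g0 + shift"
    by (simp add: Y_def shifted_g_def g_init)
  then have Y_pos: "Y > 0"
    using g0_pos shift_pos by simp
  have "Cp * (g0 powr (p + 1) + shift powr (p + 1)) \<le> Cp * Y powr (p + 1)"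
    unfolding Y_eq using add_powr_le_powr_add[of g0 shift "p + 1"] g0_pos shift_pos p_pos Cp_pos
    by simp
  then have "Cq * f0 powr (q + 1) \<le> Cp * Y powr (p + 1)"
    unfolding shift_powr using Cp_pos by (simp add: powr_minus field_simps)
  then have ln_ineq: "ln Cq + (q + 1) * ln f0 \<le> ln Cp + (p + 1) * ln Y"
    using Cp_pos Cq_pos f0_pos Y_pos by (simp add: ln_mult ln_powr flip: ln_le_cancel_iff)
  obtain a b d where p_eq: "p = a - 1" and q_eq: "q = b - 1" and d_eq: "p * q - 1 = d"
    and pos: "a > 0" "b > 0" "d > 0"
    by (rule exponents_cases)
  have "ln bound_init - ln (Y powr (- ((p * q - 1) / (q + 1))))
      = (p * q - 1) / ((p + 1) * (q + 1)) * (ln Cp + (p + 1) * ln Y - ln Cq - (q + 1) * ln f0)"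
    unfolding bound_init_def d_eq unfolding p_eq q_eq using Cp_pos Cq_pos f0_pos Y_pos pos
    by (simp add: ln_mult ln_div ln_powr) (simp add: field_simps)
  also have "\<dots> \<ge> 0"
    using ln_ineq pq p_pos q_pos by simp
  finally have "ln (Y powr (- ((p * q - 1) / (q + 1)))) \<le> ln bound_init"
    by simp
  moreover have "bound_init > 0"
    unfolding bound_init_def using Cp_pos Cq_pos f0_pos by simp
  ultimately show ?thesis
    unfolding Y_def[symmetric] using Y_pos by (subst ln_le_cancel_iff[symmetric]) auto
qed

lemma bound_coeff_eq: "bound_coeff = (p * q - 1) / (q + 1) * growth_coeff / rate"
proof -
  obtain a b d where p_eq: "p = a - 1" and q_eq: "q = b - 1" and d_eq: "p * q - 1 = d"
    and pos: "a > 0" "b > 0" "d > 0"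
    by (rule exponents_cases)
  show ?thesis
    unfolding rate_def bound_coeff_def growth_coeff_def d_eq unfolding p_eq q_eq
    using \<omega>_pos pos by (simp add: field_simps)
qed

lemma shifted_g_lower_bound:
  assumes t: "t \<in> {0..<T}"
  shows "shifted_g t powr (- ((p * q - 1) / (q + 1))) \<le> bound_init - bound_coeff * (1 - exp (- rate * t))"
  using powr_neg_le_of_superlinear_growth[OF _ _ shifted_g_deriv shifted_g_pos shifted_g_growth t]
    shifted_g_init_le rate_pos pq q_pos
  by (fastforce simp: bound_coeff_eq)

lemma g_lower_bound:
  assumes t: "t \<in> {0..<T}"
  shows "exp (\<omega> / (p + 1) * t) * g t
     \<ge> (bound_init - bound_coeff * (1 - exp (- rate * t))) powr (- (q + 1) / (p * q - 1)) - shift"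
proof -
  have "- ((p * q - 1) / (q + 1)) * (- (q + 1) / (p * q - 1)) = 1"
    using pq q_pos by (simp add: divide_simps)
  then have "shifted_g t = (shifted_g t powr (- ((p * q - 1) / (q + 1)))) powr (- (q + 1) / (p * q - 1))"
    using shifted_g_pos[OF t] by (simp add: powr_powr)
  also have "\<dots> \<ge> (bound_init - bound_coeff * (1 - exp (- rate * t))) powr (- (q + 1) / (p * q - 1))"
    using shifted_g_lower_bound[OF t] shifted_g_pos[OF t] pq q_pos
    by (intro powr_mono2') (auto simp: divide_nonpos_pos)
  finally show ?thesis
    by (simp add: shifted_g_def)
qed

lemma existence_time_le:
  assumes "blowup_ratio < 1"
  shows "T \<le> - ((q + 1) * (p + 1) / (\<omega> * (p * q - 1))) * ln (1 - blowup_ratio)"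
proof -
  have "1 - blowup_ratio < exp (- rate * t)" if t: "t \<in> {0..<T}" for t
  proof -
    have "0 < shifted_g t powr (- ((p * q - 1) / (q + 1)))"
      using shifted_g_pos[OF t] by simp
    also have "\<dots> \<le> bound_coeff * (exp (- rate * t) - (1 - blowup_ratio))"
      using shifted_g_lower_bound[OF t] by (simp add: bound_init_eq algebra_simps)
    finally show ?thesis
      using bound_coeff_pos by (simp add: zero_less_mult_iff)
  qed
  then have "T \<le> - ln (1 - blowup_ratio) / rate"
    using le_neg_ln_div_of_exp_neg_gt rate_pos blowup_ratio_pos assms by simp
  then show ?thesis
    by (simp add: rate_def mult.commute)
qed

end

theorem corollary2p4:
  fixes f g f' g' :: "real \<Rightarrow> real"
    and f0 g0 \<omega> p q Cp Cq T :: real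
  assumes f0_pos: "f0 > 0" and g0_pos: "g0 > 0" and \<omega>_pos: "\<omega> > 0"
    and p_pos: "p > 0" and q_pos: "q > 0" and pq: "p * q > 1"
    and Cp_pos: "Cp > 0" and Cq_pos: "Cq > 0" and T_pos: "T > 0"
    and f_deriv: "\<And>t. t \<in> {0..<T} \<Longrightarrow> (f has_real_derivative f' t) (at t within {0..<T})"
    and g_deriv: "\<And>t. t \<in> {0..<T} \<Longrightarrow> (g has_real_derivative g' t) (at t within {0..<T})"
    and f'_cont: "continuous_on {0..<T} f'"
    and g'_cont: "continuous_on {0..<T} g'"
    and f_nonneg: "\<And>t. t \<in> {0..<T} \<Longrightarrow> f t \<ge> 0"
    and g_nonneg: "\<And>t. t \<in> {0..<T} \<Longrightarrow> g t \<ge> 0"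
    and f_ode: "\<And>t. t \<in> {0..<T} \<Longrightarrow> f' t + \<omega> / (q + 1) * f t = (p + 1) * Cp * g t powr p"
    and g_ode: "\<And>t. t \<in> {0..<T} \<Longrightarrow> g' t + \<omega> / (p + 1) * g t = (q + 1) * Cq * f t powr q"
    and f_init: "f 0 = f0" and g_init: "g 0 = g0"
  shows "(\<forall>t \<in> {0..<T}.
            Cq * f t powr (q + 1) * exp (\<omega> * t) - Cq * f0 powr (q + 1)
          = Cp * g t powr (p + 1) * exp (\<omega> * t) - Cp * g0 powr (p + 1))
       \<and> (max (2 powr ((p + 1) / (q + 1) * (p * q / (p * q - 1)))
                 * (q + 1) powr (- (p + 1) / (p * q - 1))
                 * (p + 1) powr (- (p + 1) / (p * q - 1))
                 * \<omega> powr ((p + 1) / (p * q - 1))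
                 * Cp powr (- 1 / (p * q - 1))
                 * Cq powr (- p / (p * q - 1)))
               (Cq powr (- 1 / (q + 1)) * Cp powr (1 / (q + 1)) * g0 powr ((p + 1) / (q + 1)))
             < f0
          \<longrightarrow> (\<forall>t \<in> {0..<T}.
                exp (\<omega> / (p + 1) * t) * g t \<ge>
                  ((Cp / Cq) powr ((p * q - 1) / ((p + 1) * (q + 1))) * f0 powr (- (p * q - 1) / (p + 1))
                   - 2 powr (- (p * q) / (q + 1)) * (q + 1) * (p + 1) * (1 / \<omega>)
                     * Cq powr (1 / (q + 1)) * Cp powr (q / (q + 1))
                     * (1 - exp (- (\<omega> * (p * q - 1) / ((p + 1) * (q + 1))) * t)))
                  powr (- (q + 1) / (p * q - 1))
                  - (Cq * Cp powr (-1) * f0 powr (q + 1) - g0 powr (p + 1)) powr (1 / (p + 1)))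
            \<and> T \<le> - ((q + 1) * (p + 1) / (\<omega> * (p * q - 1)))
                   * ln (1 - 2 powr (p * q / (q + 1)) / ((q + 1) * (p + 1)) * \<omega>
                          * Cq powr (- p / (p + 1)) * Cp powr (- 1 / (p + 1))
                          * f0 powr (- (p * q - 1) / (p + 1))))"
proof -
  interpret coupled_ode f g f' g' f0 g0 \<omega> p q Cp Cq T
    using f0_pos g0_pos \<omega>_pos p_pos q_pos Cp_pos Cq_pos f_deriv g_deriv f_ode g_ode f_init g_init
    by unfold_locales
  show ?thesis (is "?energy \<and> (max ?M1 ?M2 < f0 \<longrightarrow> ?bounds)")
  proof (rule conjI[OF _ impI])
    show ?energy
      using energy_identity by blast
  next
    assume threshold: "max ?M1 ?M2 < f0"
    then have "Cp * g0 powr (p + 1) < Cq * f0 powr (q + 1)"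
      using large_data_iff by simp
    then interpret coupled_ode_large_data f g f' g' f0 g0 \<omega> p q Cp Cq T
      using pq by unfold_locales
    have "blowup_ratio < 1"
      using threshold blowup_ratio_lt_one_iff by simp
    then show ?bounds
      using g_lower_bound existence_time_le
      unfolding shift_def bound_init_def bound_coeff_def rate_def blowup_ratio_def by blast
  qed
qed

end
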